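(* Let $f:X\to\mathcal G$ be convex and $x_0\in\operatorname{dom} f$. If $x_0$ solves the scalarized Stampacchia inequality, i.e. $f(x_0)=Z$ or for all $x\in\operatorname{dom}f$ with $f(x)\ne f(x_0)$ there exists $z^*\in C^-\setminus\{0\}$ with $0<\varphi'_{f,z^*}(x_0,x-x_0)$, then it solves the set-valued Stampacchia inequality, i.e. $f(x_0)=Z$ or for all $x\in\operatorname{dom} f$ with $f(x)\neq f(x_0)$ one has $0\notin f'(x_0,x-x_0)$. If additionally the weak regularity condition $f'(x,u)=\bigcap_{z^*\in C^-\setminus\{0\}}f'_{z^*}(x,u)$ holds for all $x,u\in X$, then $x_0$ solves the set-valued Stampacchia inequality if and only if it solves the scalarized one.
   Context: $X$ real linear space, $Z$ real locally convex Hausdorff space with dual $Z^*$, $C\subseteq Z$ closed convex cone, $0\in C$, $C^-=\{z^*:z^*(c)\le0\ \forall c\in C\}$, $C^-\setminus\{0\}\ne\emptyset$. $\mathcal G=\{A\subseteq Z:A=\operatorname{cl}\operatorname{co}(A+C)\}$; $A\oplus B=\operatorname{cl}\{a+b\}$, $tA=\{ta\}$ ($t>0$), $A\ominus B=\{z:B+\{z\}\subseteq A\}$. $f$ convex: $f(tx_1+(1-t)x_2)\supseteq tf(x_1)\oplus(1-t)f(x_2)$; $\operatorname{dom}f=\{x:f(x)\ne\emptyset\}$. For $g:X\to\mathcal G$, $g'(x,u)=\bigcap_{t_0>0}\operatorname{cl}\operatorname{co}\bigcup_{0<t<t_0}\frac1t(g(x+tu)\ominus g(x))$. On $\overline{\mathbb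 R}$: inf-addition $\dot+$ ($(-\infty)\dot+(+\infty)=+\infty$), $r\ominus s=\inf\{t\in\mathbb R:r\le s\dot+t\}$ ($\inf\emptyset=+\infty$). $\varphi_{f,z^*}(x)=\inf\{-z^*(z):z\in f(x)\}$ ($+\infty$ if $f(x)=\emptyset$), $\varphi'_{f,z^*}(x,u)=\inf_{t>0}\frac1t(\varphi_{f,z^*}(x+tu)\ominus\varphi_{f,z^*}(x))$. $f_{z^*}(x)=\{z:\varphi_{f,z^*}(x)\le -z^*(z)\}$, $f'_{z^*}$ its directional derivative. *)

theory Defs
  imports "HOL-Analysis.Analysis"
begin

section \<open>Locally convex Hausdorff spaces (Hausdorff = sort t2_space)\<close>

definition locally_convex_tvs :: "'z::{real_vector,topological_space} itself \<Rightarrow> bool" where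
  "locally_convex_tvs _ \<longleftrightarrow>
     continuous_on UNIV (\<lambda>p::'z \<times> 'z. fst p + snd p) \<and>
     continuous_on UNIV (\<lambda>p::real \<times> 'z. fst p *\<^sub>R snd p) \<and>
     (\<forall>U (x::'z). open U \<and> x \<in> U \<longrightarrow> (\<exists>V. open V \<and> convex V \<and> x \<in> V \<and> V \<subseteq> U))"

definition dual_space :: "('z::{real_vector,topological_space} \<Rightarrow> real) set" where
  "dual_space = {zs. linear zs \<and> continuous_on UNIV zs}"

definition polar_cone :: "'z::{real_vector,topological_space} set \<Rightarrow> ('z \<Rightarrow> real) set" where
  "polar_cone C = {zs \<in> dual_space. \<forall>c\<in>C. zs c \<le> 0}"

definition set_add :: "'z::real_vector set \<Rightarrow> 'z set \<Rightarrow> 'z set" where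
  "set_add A B = {a + b | a b. a \<in> A \<and> b \<in> B}"

definition oplus_set :: "'z::{real_vector,topological_space} set \<Rightarrow> 'z set \<Rightarrow> 'z set" where
  "oplus_set A B = closure (set_add A B)"

definition smul_set :: "real \<Rightarrow> 'z::real_vector set \<Rightarrow> 'z set" where
  "smul_set t A = (\<lambda>a. t *\<^sub>R a) ` A"

definition ominus_set :: "'z::real_vector set \<Rightarrow> 'z set \<Rightarrow> 'z set" where
  "ominus_set A B = {z. set_add B {z} \<subseteq> A}"

definition G_space :: "'z::{real_vector,topological_space} set \<Rightarrow> 'z set set" where
  "G_space C = {A. A = closure (convex hull (set_add A C))}"

definition sv_convex :: "('x::real_vector \<Rightarrow> 'z::{real_vector,topological_space} set) \<Rightarrow> bool" where
  "sv_convex f \<longleftrightarrow> (\<forall>x1 x2 t. 0 < t \<and> t < 1 \<longrightarrow>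
      oplus_set (smul_set t (f x1)) (smul_set (1 - t) (f x2)) \<subseteq> f (t *\<^sub>R x1 + (1 - t) *\<^sub>R x2))"

definition sv_dom :: "('x \<Rightarrow> 'z set) \<Rightarrow> 'x set" where
  "sv_dom f = {x. f x \<noteq> {}}"

definition sv_dir_deriv ::
  "('x::real_vector \<Rightarrow> 'z::{real_vector,topological_space} set) \<Rightarrow> 'x \<Rightarrow> 'x \<Rightarrow> 'z set" where
  "sv_dir_deriv g x u = (\<Inter>t0\<in>{t0::real. 0 < t0}.
      closure (convex hull (\<Union>t\<in>{t::real. 0 < t \<and> t < t0}.
          smul_set (1 / t) (ominus_set (g (x + t *\<^sub>R u)) (g x)))))"

section \<open>Extended reals (Isabelle's ereal addition is inf-addition: \<infinity> + -\<infinity> = \<infinity>)\<close>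

definition eminus :: "ereal \<Rightarrow> ereal \<Rightarrow> ereal" where
  "eminus r s = Inf (ereal ` {t::real. r \<le> s + ereal t})"

definition phi :: "('x \<Rightarrow> 'z set) \<Rightarrow> ('z \<Rightarrow> real) \<Rightarrow> 'x \<Rightarrow> ereal" where
  "phi f zs x = Inf ((\<lambda>z. ereal (- zs z)) ` f x)"

definition phi_dir_deriv ::
  "('x::real_vector \<Rightarrow> 'z set) \<Rightarrow> ('z \<Rightarrow> real) \<Rightarrow> 'x \<Rightarrow> 'x \<Rightarrow> ereal" where
  "phi_dir_deriv f zs x u =
     (INF t\<in>{t::real. 0 < t}. ereal (1 / t) * eminus (phi f zs (x + t *\<^sub>R u)) (phi f zs x))"

definition f_scal :: "('x \<Rightarrow> 'z set) \<Rightarrow> ('z \<Rightarrow> real) \<Rightarrow> 'x \<Rightarrow> 'z set" where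
  "f_scal f zs x = {z. phi f zs x \<le> ereal (- zs z)}"

definition scalar_stampacchia ::
  "'z::{real_vector,topological_space} set \<Rightarrow> ('x::real_vector \<Rightarrow> 'z set) \<Rightarrow> 'x \<Rightarrow> bool" where
  "scalar_stampacchia C f x0 \<longleftrightarrow> f x0 = UNIV \<or>
     (\<forall>x\<in>sv_dom f. f x \<noteq> f x0 \<longrightarrow>
        (\<exists>zs\<in>polar_cone C - {\<lambda>_. 0}. 0 < phi_dir_deriv f zs x0 (x - x0)))"

definition setvalued_stampacchia ::
  "('x::real_vector \<Rightarrow> 'z::{real_vector,topological_space} set) \<Rightarrow> 'x \<Rightarrow> bool" where
  "setvalued_stampacchia f x0 \<longleftrightarrow> f x0 = UNIV \<or>
     (\<forall>x\<in>sv_dom f. f x \<noteq> f x0 \<longrightarrow> 0 \<notin> sv_dir_deriv f x0 (x - x0))"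

definition weak_regular ::
  "'z::{real_vector,topological_space} set \<Rightarrow> ('x::real_vector \<Rightarrow> 'z set) \<Rightarrow> bool" where
  "weak_regular C f \<longleftrightarrow> (\<forall>x u. sv_dir_deriv f x u =
      (\<Inter>zs\<in>polar_cone C - {\<lambda>_. 0}. sv_dir_deriv (f_scal f zs) x u))"

end

theory Submission
  imports Defs
begin

text \<open>
  For a continuous linear functional \<open>z\<^sup>*\<close> the set \<open>{w. \<phi>'(x,u) \<le> -z\<^sup>*(w)}\<close> is a closed convex
  set containing every difference quotient \<open>(1/t)(f(x+tu) \<ominus> f(x))\<close>; hence it contains \<open>f'(x,u)\<close>,
  and \<open>0 \<in> f'(x,u)\<close> forces \<open>\<phi>'(x,u) \<le> 0\<close>. This gives the first implication without any convexity.
  Conversely, if \<open>\<phi>'(x,u) \<le> 0\<close> then, by convexity of \<open>f\<close>, \<open>\<phi>(x+su) \<le> \<phi>(x) + s\<epsilon>\<close> for arbitrarily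
  small \<open>s > 0\<close>, so with \<open>z\<^sup>*(e) = -1\<close> the vector \<open>\<epsilon>e\<close> is a difference quotient of \<open>f\<^sub>z\<^sub>*\<close>. Letting
  \<open>\<epsilon> \<rightarrow> 0\<close> puts \<open>0\<close> into \<open>f\<^sub>z\<^sub>*'(x,u)\<close>, and weak regularity turns this into \<open>0 \<in> f'(x,u)\<close>.
\<close>

lemma linear_functional_attains_minus_one:
  fixes zs :: "'a::real_vector \<Rightarrow> real"
  assumes lin: "linear zs" and nz: "zs \<noteq> (\<lambda>_. 0)"
  obtains e where "zs e = -1"
proof -
  from nz obtain v where v: "zs v \<noteq> 0" by auto
  have "zs ((-1 / zs v) *\<^sub>R v) = -1"
    using v by (simp add: linear_neg[OF lin] linear_scale[OF lin])
  then show ?thesis by (rule that)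
qed

lemma polar_cone_linear: "zs \<in> polar_cone C \<Longrightarrow> linear zs"
  and polar_cone_continuous: "zs \<in> polar_cone C \<Longrightarrow> continuous_on UNIV zs"
  unfolding polar_cone_def dual_space_def by auto

lemma closed_ereal_le_functional:
  assumes cont: "continuous_on UNIV zs"
  shows "closed {w. p \<le> ereal (- zs w)}"
proof (cases p)
  case (real r)
  then have "{w. p \<le> ereal (- zs w)} = {w. zs w \<le> - r}" by auto
  then show ?thesis using closed_Collect_le[OF cont continuous_on_const] by simp
qed simp_all

lemma convex_ereal_le_functional:
  assumes lin: "linear zs"
  shows "convex {w. p \<le> ereal (- zs w)}"
proof (cases p)
  case (real r)
  have "convex (zs -` {..- r})" by (rule convex_linear_vimage[OF lin convex_real_interval(2)])
  moreover have "{w. p \<le> ereal (- zs w)} = zs -` {..- r}" using real by auto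
  ultimately show ?thesis by simp
qed simp_all

lemma phi_le_of_mem_ominus_set:
  assumes lin: "linear zs" and z: "z \<in> ominus_set (g y) (g x)"
  shows "phi g zs y \<le> phi g zs x + ereal (- zs z)"
proof -
  have "phi g zs y - ereal (- zs z) \<le> phi g zs x"
    unfolding phi_def[of g zs x]
  proof (rule INF_greatest)
    fix b assume b: "b \<in> g x"
    then have "b + z \<in> g y" using z unfolding ominus_set_def set_add_def by auto
    then have "phi g zs y \<le> ereal (- zs (b + z))" unfolding phi_def by (rule INF_lower)
    also have "\<dots> = ereal (- zs b) + ereal (- zs z)" by (simp add: linear_add[OF lin])
    finally show "phi g zs y - ereal (- zs z) \<le> ereal (- zs b)" by (simp add: ereal_minus_le)
  qed
  then show ?thesis by (simp add: ereal_minus_le)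
qed

lemma eminus_le: "r \<le> s + ereal t \<Longrightarrow> eminus r s \<le> ereal t"
  unfolding eminus_def by (intro Inf_lower) auto

lemma phi_dir_deriv_le_difference_quotient:
  assumes lin: "linear zs" and t: "0 < t"
    and z: "z \<in> ominus_set (g (x + t *\<^sub>R u)) (g x)"
  shows "phi_dir_deriv g zs x u \<le> ereal (- zs ((1 / t) *\<^sub>R z))"
proof -
  have "phi_dir_deriv g zs x u \<le> ereal (1 / t) * eminus (phi g zs (x + t *\<^sub>R u)) (phi g zs x)"
    unfolding phi_dir_deriv_def using t by (intro INF_lower) auto
  also have "\<dots> \<le> ereal (1 / t) * ereal (- zs z)"
    using t eminus_le[OF phi_le_of_mem_ominus_set[where g = g, OF lin z]] by (intro ereal_mult_left_mono) auto
  also have "\<dots> = ereal (- zs ((1 / t) *\<^sub>R z))" by (simp add: linear_scale[OF lin])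
  finally show ?thesis .
qed

lemma phi_dir_deriv_le_of_mem_sv_dir_deriv:
  assumes lin: "linear zs" and cont: "continuous_on UNIV zs"
    and z: "z \<in> sv_dir_deriv g x u"
  shows "phi_dir_deriv g zs x u \<le> ereal (- zs z)"
proof -
  define H where "H = {w. phi_dir_deriv g zs x u \<le> ereal (- zs w)}"
  define Q where "Q = (\<Union>t\<in>{t::real. 0 < t \<and> t < 1}.
                          smul_set (1 / t) (ominus_set (g (x + t *\<^sub>R u)) (g x)))"
  have "Q \<subseteq> H"
    unfolding Q_def H_def smul_set_def
    using phi_dir_deriv_le_difference_quotient[OF lin] by auto
  then have "closure (convex hull Q) \<subseteq> H"
    using closed_ereal_le_functional[OF cont] convex_ereal_le_functional[OF lin]
    unfolding H_def by (meson closure_minimal hull_minimal)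
  moreover have "z \<in> closure (convex hull Q)"
    using z unfolding sv_dir_deriv_def Q_def by (rule INT_D) simp
  ultimately show ?thesis unfolding H_def by auto
qed

lemma phi_convex_combination_le:
  assumes f_convex: "sv_convex f" and lin: "linear zs" and l: "0 < l" "l < 1"
    and a1: "a1 \<in> f x1" and a2: "a2 \<in> f x2"
  shows "phi f zs (l *\<^sub>R x1 + (1 - l) *\<^sub>R x2) \<le> ereal (l * - zs a1 + (1 - l) * - zs a2)"
proof -
  have "l *\<^sub>R a1 + (1 - l) *\<^sub>R a2 \<in> set_add (smul_set l (f x1)) (smul_set (1 - l) (f x2))"
    using a1 a2 unfolding set_add_def smul_set_def by blast
  then have "l *\<^sub>R a1 + (1 - l) *\<^sub>R a2 \<in> f (l *\<^sub>R x1 + (1 - l) *\<^sub>R x2)"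
    using f_convex l closure_subset unfolding sv_convex_def oplus_set_def by blast
  then have "phi f zs (l *\<^sub>R x1 + (1 - l) *\<^sub>R x2) \<le> ereal (- zs (l *\<^sub>R a1 + (1 - l) *\<^sub>R a2))"
    unfolding phi_def by (rule INF_lower)
  then show ?thesis by (simp add: linear_add[OF lin] linear_scale[OF lin])
qed

text \<open>The slope \<open>(\<phi>(x\<^sub>0+tu) - \<phi>(x\<^sub>0))/t\<close> of the convex function \<open>t \<mapsto> \<phi>(x\<^sub>0+tu)\<close> is monotone in \<open>t\<close>.\<close>

lemma phi_ray_bound_mono:
  assumes f_convex: "sv_convex f" and lin: "linear zs" and st: "0 < s" "s < t"
    and bound_t: "phi f zs (x0 + t *\<^sub>R u) \<le> phi f zs x0 + ereal (t * \<epsilon>)"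
  shows "phi f zs (x0 + s *\<^sub>R u) \<le> phi f zs x0 + ereal (s * \<epsilon>)"
proof -
  define l where "l = s / t"
  have l: "0 < l" "l < 1" "l * t = s" using st unfolding l_def by auto
  have "l *\<^sub>R (x0 + t *\<^sub>R u) + (1 - l) *\<^sub>R x0 = x0 + (l * t) *\<^sub>R u"
    by (simp add: algebra_simps)
  then have ray: "l *\<^sub>R (x0 + t *\<^sub>R u) + (1 - l) *\<^sub>R x0 = x0 + s *\<^sub>R u"
    using l(3) by simp
  have "phi f zs (x0 + s *\<^sub>R u) - ereal (s * \<epsilon>) \<le> phi f zs x0"
    unfolding phi_def[of f zs x0]
  proof (rule INF_greatest)
    fix a2 assume a2: "a2 \<in> f x0"
    have "phi f zs (x0 + s *\<^sub>R u) \<le> ereal (- zs a2 + s * \<epsilon>)"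
    proof (rule ereal_le_epsilon2)
      fix d :: real assume d: "0 < d"
      have "phi f zs x0 \<le> ereal (- zs a2)" unfolding phi_def using a2 by (rule INF_lower)
      then have "phi f zs x0 + ereal (t * \<epsilon>) \<le> ereal (- zs a2) + ereal (t * \<epsilon>)"
        by (rule add_right_mono)
      with bound_t have "phi f zs (x0 + t *\<^sub>R u) \<le> ereal (- zs a2 + t * \<epsilon>)" by simp
      also have "\<dots> < ereal (- zs a2 + t * \<epsilon> + d)" using d by simp
      finally have "phi f zs (x0 + t *\<^sub>R u) < ereal (- zs a2 + t * \<epsilon> + d)" .
      then obtain a1 where a1: "a1 \<in> f (x0 + t *\<^sub>R u)" "- zs a1 < - zs a2 + t * \<epsilon> + d"
        unfolding phi_def by (auto simp: INF_less_iff)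
      have "l * - zs a1 \<le> l * (- zs a2 + t * \<epsilon> + d)"
        using l a1(2) by (intro mult_left_mono) auto
      then have "l * - zs a1 + (1 - l) * - zs a2 \<le> - zs a2 + (l * t) * \<epsilon> + l * d"
        by (simp add: algebra_simps)
      also have "\<dots> \<le> - zs a2 + s * \<epsilon> + d"
        using l mult_left_le_one_le[of d l] d by simp
      finally have "l * - zs a1 + (1 - l) * - zs a2 \<le> - zs a2 + s * \<epsilon> + d" .
      moreover have "phi f zs (x0 + s *\<^sub>R u) \<le> ereal (l * - zs a1 + (1 - l) * - zs a2)"
        using phi_convex_combination_le[OF f_convex lin l(1,2) a1(1) a2] ray by simp
      ultimately have "phi f zs (x0 + s *\<^sub>R u) \<le> ereal (- zs a2 + s * \<epsilon> + d)"
        by (meson ereal_less_eq(3) order_trans)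
      then show "phi f zs (x0 + s *\<^sub>R u) \<le> ereal (- zs a2 + s * \<epsilon>) + ereal d" by simp
    qed
    then show "phi f zs (x0 + s *\<^sub>R u) - ereal (s * \<epsilon>) \<le> ereal (- zs a2)"
      by (simp add: ereal_minus_le)
  qed
  then show ?thesis by (simp add: ereal_minus_le)
qed

lemma phi_ray_bound_of_phi_dir_deriv_less:
  assumes less: "phi_dir_deriv f zs x0 u < ereal \<epsilon>"
  obtains t where "0 < t" "phi f zs (x0 + t *\<^sub>R u) \<le> phi f zs x0 + ereal (t * \<epsilon>)"
proof -
  obtain t where t: "0 < t"
    and lt: "ereal (1 / t) * eminus (phi f zs (x0 + t *\<^sub>R u)) (phi f zs x0) < ereal \<epsilon>"
    using less unfolding phi_dir_deriv_def by (auto simp: INF_less_iff)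
  have "eminus (phi f zs (x0 + t *\<^sub>R u)) (phi f zs x0) < ereal (t * \<epsilon>)"
  proof (rule ccontr)
    assume "\<not> ?thesis"
    then have "ereal (1 / t) * ereal (t * \<epsilon>)
                 \<le> ereal (1 / t) * eminus (phi f zs (x0 + t *\<^sub>R u)) (phi f zs x0)"
      using t by (intro ereal_mult_left_mono) auto
    then show False using lt t by simp
  qed
  then obtain r where "phi f zs (x0 + t *\<^sub>R u) \<le> phi f zs x0 + ereal r" "r < t * \<epsilon>"
    unfolding eminus_def by (auto simp: Inf_less_iff)
  then have "phi f zs (x0 + t *\<^sub>R u) \<le> phi f zs x0 + ereal (t * \<epsilon>)"
    using add_left_mono[of "ereal r" "ereal (t * \<epsilon>)" "phi f zs x0"] by simp
  with t show ?thesis by (rule that)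
qed

lemma mem_ominus_set_f_scal:
  assumes lin: "linear zs" and e: "zs e = -1"
    and bound: "phi f zs (x0 + s *\<^sub>R u) \<le> phi f zs x0 + ereal (s * \<epsilon>)"
  shows "s *\<^sub>R (\<epsilon> *\<^sub>R e) \<in> ominus_set (f_scal f zs (x0 + s *\<^sub>R u)) (f_scal f zs x0)"
  unfolding ominus_set_def set_add_def f_scal_def
proof clarify
  fix w assume w: "phi f zs x0 \<le> ereal (- zs w)"
  have "phi f zs (x0 + s *\<^sub>R u) \<le> ereal (- zs w) + ereal (s * \<epsilon>)"
    using bound add_right_mono[OF w] by (rule order_trans)
  then show "phi f zs (x0 + s *\<^sub>R u) \<le> ereal (- zs (w + s *\<^sub>R (\<epsilon> *\<^sub>R e)))"
    using e by (simp add: linear_add[OF lin] linear_scale[OF lin])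
qed

lemma tendsto_scaleR_at_right_zero:
  assumes "locally_convex_tvs TYPE('z::{real_vector,topological_space})"
  shows "((\<lambda>\<epsilon>::real. \<epsilon> *\<^sub>R e) \<longlongrightarrow> (0::'z)) (at_right 0)"
proof -
  have "continuous_on UNIV (\<lambda>p::real \<times> 'z. fst p *\<^sub>R snd p)"
    using assms unfolding locally_convex_tvs_def by blast
  then have "continuous_on UNIV ((\<lambda>p::real \<times> 'z. fst p *\<^sub>R snd p) \<circ> (\<lambda>\<epsilon>. (\<epsilon>, e)))"
    by (intro continuous_on_compose continuous_on_Pair continuous_on_id continuous_on_const)
       (rule continuous_on_subset, auto)
  then have "continuous_on UNIV (\<lambda>\<epsilon>::real. \<epsilon> *\<^sub>R e)" by (simp add: o_def)
  then have "((\<lambda>\<epsilon>::real. \<epsilon> *\<^sub>R e) \<longlongrightarrow> 0 *\<^sub>R e) (at 0)"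
    by (metis continuous_on_def UNIV_I at_within_open open_UNIV)
  then show ?thesis by (simp add: filterlim_at_split)
qed

lemma zero_mem_sv_dir_deriv_f_scal:
  fixes f :: "'x::real_vector \<Rightarrow> 'z::{real_vector,topological_space} set"
  assumes lctvs: "locally_convex_tvs TYPE('z)" and f_convex: "sv_convex f"
    and lin: "linear zs" and e: "zs e = -1"
    and nonpos: "phi_dir_deriv f zs x0 u \<le> 0"
  shows "0 \<in> sv_dir_deriv (f_scal f zs) x0 u"
  unfolding sv_dir_deriv_def
proof (rule INT_I)
  fix t0 :: real assume "t0 \<in> {t0. 0 < t0}"
  then have t0: "0 < t0" by simp
  define Q where "Q = (\<Union>t\<in>{t::real. 0 < t \<and> t < t0}.
                          smul_set (1 / t) (ominus_set (f_scal f zs (x0 + t *\<^sub>R u)) (f_scal f zs x0)))"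
  have in_Q: "\<epsilon> *\<^sub>R e \<in> Q" if \<epsilon>: "0 < \<epsilon>" for \<epsilon> :: real
  proof -
    have "phi_dir_deriv f zs x0 u < ereal \<epsilon>"
      using le_less_trans[OF nonpos, of "ereal \<epsilon>"] \<epsilon> by simp
    then obtain t where t: "0 < t"
      and bound_t: "phi f zs (x0 + t *\<^sub>R u) \<le> phi f zs x0 + ereal (t * \<epsilon>)"
      by (rule phi_ray_bound_of_phi_dir_deriv_less)
    define s where "s = min t (t0 / 2)"
    have s: "0 < s" "s < t0" using t t0 unfolding s_def by auto
    have "phi f zs (x0 + s *\<^sub>R u) \<le> phi f zs x0 + ereal (s * \<epsilon>)"
    proof (cases "s < t")
      case True
      then show ?thesis by (rule phi_ray_bound_mono[OF f_convex lin s(1) _ bound_t])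
    next
      case False
      then have "s = t" unfolding s_def by simp
      then show ?thesis using bound_t by simp
    qed
    then have "s *\<^sub>R (\<epsilon> *\<^sub>R e) \<in> ominus_set (f_scal f zs (x0 + s *\<^sub>R u)) (f_scal f zs x0)"
      by (rule mem_ominus_set_f_scal[OF lin e])
    moreover have "\<epsilon> *\<^sub>R e = (1 / s) *\<^sub>R (s *\<^sub>R (\<epsilon> *\<^sub>R e))" using s by simp
    ultimately show ?thesis unfolding Q_def smul_set_def using s by blast
  qed
  have "\<forall>\<^sub>F \<epsilon> in at_right 0. \<epsilon> *\<^sub>R e \<in> closure Q"
    using eventually_at_right_less[of "0::real"]
    by (rule eventually_mono) (use in_Q closure_subset in blast)
  then have "0 \<in> closure Q"
    using Lim_in_closed_set[OF closed_closure _ _ tendsto_scaleR_at_right_zero[OF lctvs]] by simp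
  then show "0 \<in> closure (convex hull Q)"
    using closure_mono[OF hull_subset] by blast
qed

lemma scalar_stampacchia_imp_setvalued_stampacchia:
  assumes "scalar_stampacchia C f x0"
  shows "setvalued_stampacchia f x0"
  unfolding setvalued_stampacchia_def
proof (intro disj_imp[THEN iffD2] impI ballI)
  fix x assume "f x0 \<noteq> UNIV" "x \<in> sv_dom f" "f x \<noteq> f x0"
  then obtain zs where zs: "zs \<in> polar_cone C - {\<lambda>_. 0}"
    and pos: "0 < phi_dir_deriv f zs x0 (x - x0)"
    using assms unfolding scalar_stampacchia_def by blast
  then have lin: "linear zs" and cont: "continuous_on UNIV zs"
    using polar_cone_linear polar_cone_continuous by blast+
  show "0 \<notin> sv_dir_deriv f x0 (x - x0)"
  proof
    assume "0 \<in> sv_dir_deriv f x0 (x - x0)"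
    then have "phi_dir_deriv f zs x0 (x - x0) \<le> ereal (- zs 0)"
      by (rule phi_dir_deriv_le_of_mem_sv_dir_deriv[OF lin cont])
    with pos show False by (simp add: linear_0[OF lin] zero_ereal_def)
  qed
qed

lemma setvalued_stampacchia_imp_scalar_stampacchia:
  fixes f :: "'x::real_vector \<Rightarrow> 'z::{real_vector,topological_space} set"
  assumes lctvs: "locally_convex_tvs TYPE('z)" and f_convex: "sv_convex f"
    and regular: "weak_regular C f" and sv: "setvalued_stampacchia f x0"
  shows "scalar_stampacchia C f x0"
  unfolding scalar_stampacchia_def
proof (intro disj_imp[THEN iffD2] impI ballI)
  fix x assume "f x0 \<noteq> UNIV" "x \<in> sv_dom f" "f x \<noteq> f x0"
  then have "0 \<notin> sv_dir_deriv f x0 (x - x0)"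
    using sv unfolding setvalued_stampacchia_def by blast
  then obtain zs where zs: "zs \<in> polar_cone C - {\<lambda>_. 0}"
    and not_mem: "0 \<notin> sv_dir_deriv (f_scal f zs) x0 (x - x0)"
    using regular unfolding weak_regular_def by blast
  then have lin: "linear zs" using polar_cone_linear by blast
  obtain e where e: "zs e = -1"
    using linear_functional_attains_minus_one[OF lin] zs by blast
  have "\<not> phi_dir_deriv f zs x0 (x - x0) \<le> 0"
    using zero_mem_sv_dir_deriv_f_scal[OF lctvs f_convex lin e] not_mem by blast
  with zs show "\<exists>zs\<in>polar_cone C - {\<lambda>_. 0}. 0 < phi_dir_deriv f zs x0 (x - x0)"
    by (auto simp: not_le)
qed

theorem mainTheorem12:
  fixes C :: "'z::{real_vector,t2_space} set"
    and f :: "'x::real_vector \<Rightarrow> 'z set"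
    and x0 :: 'x
  assumes lctvs: "locally_convex_tvs TYPE('z)"
    and C_closed: "closed C" and C_cone: "convex_cone C" and C_zero: "0 \<in> C"
    and C_polar: "polar_cone C - {\<lambda>_. 0} \<noteq> {}"
    and f_G: "\<forall>x. f x \<in> G_space C"
    and f_convex: "sv_convex f"
    and x0_dom: "x0 \<in> sv_dom f"
  shows "(scalar_stampacchia C f x0 \<longrightarrow> setvalued_stampacchia f x0) \<and>
         (weak_regular C f \<longrightarrow>
            (setvalued_stampacchia f x0 \<longleftrightarrow> scalar_stampacchia C f x0))"
  using scalar_stampacchia_imp_setvalued_stampacchia
    setvalued_stampacchia_imp_scalar_stampacchia[OF lctvs f_convex]
  by blast

end
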